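(* Let $\lambda\supseteq\mu$ be partitions, $T$ a cover-expansive Dyck tiling of $\lambda\setminus\mu$, and $\mathfrak a$ a node such that $\mathfrak a$ and $\mathtt N(\mathfrak a)$ both lie in $\lambda\setminus\mu$. Then $\operatorname{dp}(\mathtt N(\mathfrak a))<\operatorname{dp}(\mathfrak a)$.
   Context: Partitions are identified with Young diagrams $\{(a,b)\in\mathbb N^2:b\le\lambda_a\}$; nodes are elements of $\mathbb N^2$; $(a,b)$ has height $\operatorname{ht}(a,b)=a+b$ and lies in column $b-a$ (smaller column = further left). $\mathtt{NE}(\mathfrak n)=\mathfrak n+(0,1)$, $\mathtt{SW}(\mathfrak n)=\mathfrak n-(0,1)$, $\mathtt{SE}(\mathfrak n)=\mathfrak n-(1,0)$, $\mathtt N(\mathfrak n)=\mathfrak n+(1,1)$. A tile is a finite nonempty set $t$ of nodes orderable $\mathfrak n_1,\dots,\mathfrak n_r$ with $\mathfrak n_{i+1}\in\{\mathtt{NE}(\mathfrak n_i),\mathtt{SE}(\mathfrak n_i)\}$; start = leftmost node, end = rightmost node; $\operatorname{ht}(t)$ is the maximum height of its nodes; Dyck tile if start and end have height $\operatorname{ht}(t)$. The depth of $\mathfrak n\in t$ is $\operatorname{dp}(\mathfrak n)=\operatorname{ht}(t)-\operatorname{ht}(\mathfrak n)$. A Dyck tiling of $\lambda\setminus\mu$ is a partition of it into Dyck tiles. It is cover-expansive if (left) whenever $\mathfrak a,\mathtt{SE}(\mathfrak a)\in\lambda\setminus\mu$, the tile of $\mathtt{SE}(\mathfrak a)$ starts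 weakly left of the start of the tile of $\mathfrak a$, and (right) whenever $\mathfrak a,\mathtt{SW}(\mathfrak a)\in\lambda\setminus\mu$, the tile of $\mathtt{SW}(\mathfrak a)$ ends weakly right of the end of the tile of $\mathfrak a$. *)

theory Defs
  imports Main
begin

type_synonym node = "int \<times> int"

text \<open>A partition is identified with its Young diagram: a finite set of nodes with
 positive coordinates that is closed downwards, i.e. of the form
 {(a,b). b \<le> lambda_a} for a weakly decreasing, eventually zero sequence lambda.\<close>

definition is_partition :: "node set \<Rightarrow> bool" where
  "is_partition L \<longleftrightarrow> finite L \<and>
     (\<forall>(a,b)\<in>L. 1 \<le> a \<and> 1 \<le> b) \<and>
     (\<forall>a b a' b'. (a,b) \<in> L \<and> 1 \<le> a' \<and> a' \<le> a \<and> 1 \<le> b' \<and> b' \<le> b \<longrightarrow> (a',b') \<in> L)"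

definition ht :: "node \<Rightarrow> int" where "ht n = fst n + snd n"
definition col :: "node \<Rightarrow> int" where "col n = snd n - fst n"

definition NE :: "node \<Rightarrow> node" where "NE n = (fst n, snd n + 1)"
definition SW :: "node \<Rightarrow> node" where "SW n = (fst n, snd n - 1)"
definition SE :: "node \<Rightarrow> node" where "SE n = (fst n - 1, snd n)"
definition Nn :: "node \<Rightarrow> node" where "Nn n = (fst n + 1, snd n + 1)"

definition is_tile :: "node set \<Rightarrow> bool" where
  "is_tile t \<longleftrightarrow> (\<exists>ns. ns \<noteq> [] \<and> set ns = t \<and>
      (\<forall>i. Suc i < length ns \<longrightarrow> ns ! Suc i \<in> {NE (ns ! i), SE (ns ! i)}))"

definition tile_start :: "node set \<Rightarrow> node" where
  "tile_start t = (THE n. n \<in> t \<and> (\<forall>m\<in>t. col n \<le> col m))"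

definition tile_end :: "node set \<Rightarrow> node" where
  "tile_end t = (THE n. n \<in> t \<and> (\<forall>m\<in>t. col m \<le> col n))"

definition tile_ht :: "node set \<Rightarrow> int" where
  "tile_ht t = Max (ht ` t)"

definition is_dyck_tile :: "node set \<Rightarrow> bool" where
  "is_dyck_tile t \<longleftrightarrow> is_tile t \<and> ht (tile_start t) = tile_ht t \<and> ht (tile_end t) = tile_ht t"

definition is_dyck_tiling :: "node set set \<Rightarrow> node set \<Rightarrow> node set \<Rightarrow> bool" where
  "is_dyck_tiling T L M \<longleftrightarrow> (\<forall>t\<in>T. is_dyck_tile t) \<and>
     (\<forall>t\<in>T. \<forall>s\<in>T. t \<noteq> s \<longrightarrow> t \<inter> s = {}) \<and> \<Union>T = L - M"

definition tile_of :: "node set set \<Rightarrow> node \<Rightarrow> node set" where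
  "tile_of T n = (THE t. t \<in> T \<and> n \<in> t)"

definition dp :: "node set set \<Rightarrow> node \<Rightarrow> int" where
  "dp T n = tile_ht (tile_of T n) - ht n"

definition cover_expansive :: "node set set \<Rightarrow> node set \<Rightarrow> node set \<Rightarrow> bool" where
  "cover_expansive T L M \<longleftrightarrow>
     (\<forall>a. a \<in> L - M \<and> SE a \<in> L - M \<longrightarrow>
        col (tile_start (tile_of T (SE a))) \<le> col (tile_start (tile_of T a))) \<and>
     (\<forall>a. a \<in> L - M \<and> SW a \<in> L - M \<longrightarrow>
        col (tile_end (tile_of T a)) \<le> col (tile_end (tile_of T (SW a))))"

end

theory Submission
  imports Defs
begin

text \<open>Let \<open>a\<close> lie in the tile \<open>t\<close> and \<open>N(a)\<close> in the tile \<open>t'\<close>; the claim amounts to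
  \<open>ht(t') \<le> ht(t) + 1\<close>. Cover-expansiveness at the diamond spanned by \<open>a\<close> and \<open>N(a)\<close> shows
  that \<open>t\<close> starts weakly left of \<open>t'\<close> or ends weakly right of it. In the first case, walking
  left along \<open>t'\<close> from \<open>N(a)\<close>, every node of \<open>t'\<close> stays directly above a node of \<open>t\<close>,
  again by cover-expansiveness, until the start of \<open>t'\<close> is reached; there the node to the
  north-west of the node below lies in \<open>t\<close>, which bounds \<open>ht(t')\<close>. The second case is the
  first one for the transposed diagrams.\<close>

definition NW :: "node \<Rightarrow> node" where "NW n = (fst n + 1, snd n)"

lemma col_moves [simp]:
  "col (NE n) = col n + 1" "col (SE n) = col n + 1" "col (SW n) = col n - 1"
  "col (NW n) = col n - 1" "col (Nn n) = col n"
  by (simp_all add: col_def NE_def SE_def SW_def NW_def Nn_def)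

lemma ht_moves [simp]:
  "ht (NE n) = ht n + 1" "ht (SE n) = ht n - 1" "ht (SW n) = ht n - 1"
  "ht (NW n) = ht n + 1" "ht (Nn n) = ht n + 2"
  by (simp_all add: ht_def NE_def SE_def SW_def NW_def Nn_def)

lemma moves_inverse [simp]:
  "SW (NE n) = n" "NE (SW n) = n" "NW (SE n) = n" "SE (NW n) = n"
  by (simp_all add: NE_def SE_def SW_def NW_def)

lemma moves_Nn:
  "NE (NW n) = Nn n" "NW (NE n) = Nn n" "SW (Nn n) = NW n" "SE (Nn n) = NE n"
  "Nn (SW n) = NW n" "Nn (SE n) = NE n" "NW (Nn n) = Nn (NW n)" "NE (Nn n) = Nn (NE n)"
  by (simp_all add: NE_def SE_def SW_def NW_def Nn_def)

definition tile_walk :: "node list \<Rightarrow> bool" where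
  "tile_walk ns \<longleftrightarrow> (\<forall>i. Suc i < length ns \<longrightarrow> ns ! Suc i \<in> {NE (ns ! i), SE (ns ! i)})"

lemma is_tile_iff_walk: "is_tile t \<longleftrightarrow> (\<exists>ns. ns \<noteq> [] \<and> set ns = t \<and> tile_walk ns)"
  unfolding is_tile_def tile_walk_def ..

lemma col_tile_walk_nth:
  assumes "tile_walk ns" "i < length ns"
  shows "col (ns ! i) = col (ns ! 0) + int i"
  using assms(2)
proof (induction i)
  case (Suc i)
  then have "ns ! Suc i \<in> {NE (ns ! i), SE (ns ! i)}"
    using assms(1) unfolding tile_walk_def by blast
  with Suc show ?case by auto
qed simp

lemma finite_tile: "is_tile t \<Longrightarrow> finite t"
  unfolding is_tile_iff_walk by auto

lemma tile_nonempty: "is_tile t \<Longrightarrow> t \<noteq> {}"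
  unfolding is_tile_iff_walk by auto

lemma inj_on_col_tile:
  assumes "is_tile t" shows "inj_on col t"
proof
  fix x y assume "x \<in> t" "y \<in> t" "col x = col y"
  obtain ns where ns: "set ns = t" "tile_walk ns"
    using assms unfolding is_tile_iff_walk by blast
  obtain i j where ij: "i < length ns" "x = ns ! i" "j < length ns" "y = ns ! j"
    using \<open>x \<in> t\<close> \<open>y \<in> t\<close> ns(1) by (auto simp: in_set_conv_nth)
  then have "int i = int j"
    using \<open>col x = col y\<close> col_tile_walk_nth[OF ns(2) ij(1), folded ij(2)]
      col_tile_walk_nth[OF ns(2) ij(3), folded ij(4)]
    by linarith
  with ij show "x = y" by simp
qed

lemma Nn_notin_tile:
  assumes "is_tile t" "x \<in> t" shows "Nn x \<notin> t"
proof
  assume "Nn x \<in> t"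
  with assms have "Nn x = x" using inj_onD[OF inj_on_col_tile[OF assms(1)], of "Nn x" x] by simp
  then show False by (simp add: Nn_def prod_eq_iff)
qed

lemma finite_has_min_image:
  fixes f :: "'a \<Rightarrow> 'b::linorder"
  assumes "finite S" "S \<noteq> {}"
  obtains x where "x \<in> S" "\<And>y. y \<in> S \<Longrightarrow> f x \<le> f y"
  using ex_is_arg_min_if_finite[OF assms, of f] unfolding is_arg_min_linorder by blast

lemma tile_start_eq:
  assumes "is_tile t" "n \<in> t" "\<And>m. m \<in> t \<Longrightarrow> col n \<le> col m"
  shows "tile_start t = n"
  unfolding tile_start_def
proof (rule the_equality)
  fix m assume m: "m \<in> t \<and> (\<forall>k\<in>t. col m \<le> col k)"
  with assms have "col m = col n" by (meson order_antisym)
  with m assms(2) show "m = n" using inj_on_col_tile[OF assms(1)] by (meson inj_onD)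
qed (use assms in auto)

lemma tile_end_eq:
  assumes "is_tile t" "n \<in> t" "\<And>m. m \<in> t \<Longrightarrow> col m \<le> col n"
  shows "tile_end t = n"
  unfolding tile_end_def
proof (rule the_equality)
  fix m assume m: "m \<in> t \<and> (\<forall>k\<in>t. col k \<le> col m)"
  with assms have "col m = col n" by (meson order_antisym)
  with m assms(2) show "m = n" using inj_on_col_tile[OF assms(1)] by (meson inj_onD)
qed (use assms in auto)

lemma tile_start:
  assumes "is_tile t"
  shows "tile_start t \<in> t" "\<And>m. m \<in> t \<Longrightarrow> col (tile_start t) \<le> col m"
proof -
  obtain n where n: "n \<in> t" "\<And>m. m \<in> t \<Longrightarrow> col n \<le> col m"
    using finite_has_min_image[OF finite_tile[OF assms] tile_nonempty[OF assms], of col] by blast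
  then have "tile_start t = n" by (rule tile_start_eq[OF assms])
  with n show "tile_start t \<in> t" "\<And>m. m \<in> t \<Longrightarrow> col (tile_start t) \<le> col m"
    by simp_all
qed

lemma tile_end:
  assumes "is_tile t"
  shows "tile_end t \<in> t" "\<And>m. m \<in> t \<Longrightarrow> col m \<le> col (tile_end t)"
proof -
  obtain n where n: "n \<in> t" "\<And>m. m \<in> t \<Longrightarrow> - col n \<le> - col m"
    using finite_has_min_image[OF finite_tile[OF assms] tile_nonempty[OF assms], of "\<lambda>n. - col n"]
    by blast
  then have "tile_end t = n" using tile_end_eq[OF assms] by simp
  with n show "tile_end t \<in> t" "\<And>m. m \<in> t \<Longrightarrow> col m \<le> col (tile_end t)"
    by simp_all
qed

lemma col_tile_start_less:
  assumes "is_tile t" "x \<in> t" "x \<noteq> tile_start t"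
  shows "col (tile_start t) < col x"
proof -
  have "col (tile_start t) \<noteq> col x"
    using assms tile_start(1)[OF assms(1)] inj_onD[OF inj_on_col_tile[OF assms(1)]] by metis
  with tile_start(2)[OF assms(1,2)] show ?thesis by simp
qed

lemma tile_pred:
  assumes "is_tile t" "x \<in> t" "col (tile_start t) < col x"
  shows "SW x \<in> t \<or> NW x \<in> t"
proof -
  obtain ns where ns: "set ns = t" "tile_walk ns"
    using assms(1) unfolding is_tile_iff_walk by blast
  obtain i where i: "i < length ns" "x = ns ! i"
    using assms(2) ns(1) by (metis in_set_conv_nth)
  obtain j where j: "j < length ns" "tile_start t = ns ! j"
    using tile_start(1)[OF assms(1)] ns(1) by (metis in_set_conv_nth)
  have "int j < int i"
    using assms(3) col_tile_walk_nth[OF ns(2) i(1), folded i(2)]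
      col_tile_walk_nth[OF ns(2) j(1), folded j(2)]
    by linarith
  then obtain k where k: "i = Suc k" using gr0_implies_Suc by force
  then have "x \<in> {NE (ns ! k), SE (ns ! k)}" "ns ! k \<in> t"
    using ns i unfolding tile_walk_def by auto
  then show ?thesis by auto
qed

lemma tile_succ:
  assumes "is_tile t" "x \<in> t" "col x < col (tile_end t)"
  shows "NE x \<in> t \<or> SE x \<in> t"
proof -
  obtain ns where ns: "set ns = t" "tile_walk ns"
    using assms(1) unfolding is_tile_iff_walk by blast
  obtain i where i: "i < length ns" "x = ns ! i"
    using assms(2) ns(1) by (metis in_set_conv_nth)
  obtain j where j: "j < length ns" "tile_end t = ns ! j"
    using tile_end(1)[OF assms(1)] ns(1) by (metis in_set_conv_nth)
  have "int i < int j"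
    using assms(3) col_tile_walk_nth[OF ns(2) i(1), folded i(2)]
      col_tile_walk_nth[OF ns(2) j(1), folded j(2)]
    by linarith
  with j(1) have "Suc i < length ns" by simp
  then have "ns ! Suc i \<in> {NE x, SE x}" "ns ! Suc i \<in> t"
    using ns i unfolding tile_walk_def by auto
  then show ?thesis by auto
qed

lemma partition_pos: "is_partition L \<Longrightarrow> (a, b) \<in> L \<Longrightarrow> 1 \<le> a \<and> 1 \<le> b"
  unfolding is_partition_def by blast

lemma partition_down_closed:
  assumes "is_partition L" "(a, b) \<in> L" "1 \<le> a'" "a' \<le> a" "1 \<le> b'" "b' \<le> b"
  shows "(a', b') \<in> L"
proof -
  have "\<forall>a b a' b'. (a, b) \<in> L \<and> 1 \<le> a' \<and> a' \<le> a \<and> 1 \<le> b' \<and> b' \<le> b \<longrightarrow> (a', b') \<in> L"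
    using assms(1) unfolding is_partition_def by (elim conjE)
  from this[rule_format, of a b a' b'] assms(2-) show ?thesis by simp
qed

lemma skew_diagram_diamond:
  assumes L: "is_partition L" and M: "is_partition M"
    and x: "x \<in> L - M" and Nx: "Nn x \<in> L - M"
  shows "NW x \<in> L - M" "NE x \<in> L - M"
proof -
  obtain a b where ab: "x = (a, b)" by fastforce
  have pos: "1 \<le> a" "1 \<le> b" using partition_pos[OF L] x ab by auto
  have "(a + 1, b + 1) \<in> L" using Nx ab by (simp add: Nn_def)
  then have "(a + 1, b) \<in> L" "(a, b + 1) \<in> L"
    using partition_down_closed[OF L] pos by auto
  moreover have "(a + 1, b) \<notin> M" "(a, b + 1) \<notin> M"
    using partition_down_closed[OF M, of "a + 1" b a b] partition_down_closed[OF M, of a "b + 1" a b]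
      x ab pos by auto
  ultimately show "NW x \<in> L - M" "NE x \<in> L - M" using ab by (simp_all add: NW_def NE_def)
qed

lemma dyck_tilingD:
  assumes "is_dyck_tiling T L M"
  shows "t \<in> T \<Longrightarrow> is_dyck_tile t"
    and "t \<in> T \<Longrightarrow> s \<in> T \<Longrightarrow> n \<in> t \<Longrightarrow> n \<in> s \<Longrightarrow> s = t"
    and "\<Union>T = L - M"
  using assms unfolding is_dyck_tiling_def by (elim conjE; fast)+

lemma dyck_tiling_tile: "is_dyck_tiling T L M \<Longrightarrow> t \<in> T \<Longrightarrow> is_tile t"
  using dyck_tilingD(1) unfolding is_dyck_tile_def by blast

lemma dyck_tiling_ht:
  assumes "is_dyck_tiling T L M" "t \<in> T"
  shows "ht (tile_start t) = tile_ht t" "ht (tile_end t) = tile_ht t"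
  using dyck_tilingD(1)[OF assms] unfolding is_dyck_tile_def by simp_all

lemma ht_le_tile_ht: "is_tile t \<Longrightarrow> n \<in> t \<Longrightarrow> ht n \<le> tile_ht t"
  unfolding tile_ht_def by (simp add: finite_tile)

lemma dyck_tiling_covers:
  assumes "is_dyck_tiling T L M" "n \<in> L - M"
  obtains t where "t \<in> T" "n \<in> t"
proof -
  from assms have "n \<in> \<Union>T" by (simp add: dyck_tilingD(3))
  then show ?thesis using that by (elim UnionE)
qed

lemma dyck_tiling_subset:
  assumes "is_dyck_tiling T L M" "t \<in> T" "n \<in> t"
  shows "n \<in> L - M"
proof -
  from assms(2,3) have "n \<in> \<Union>T" by (rule UnionI)
  then show ?thesis by (simp add: dyck_tilingD(3)[OF assms(1)])
qed

lemma tile_of_eq: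
  assumes "is_dyck_tiling T L M" "t \<in> T" "n \<in> t"
  shows "tile_of T n = t"
  unfolding tile_of_def
  by (rule the_equality) (use assms dyck_tilingD(2)[OF assms(1)] in simp_all)

text \<open>Unlike \<open>cover_expansive\<close>, this form does not refer to the diagrams, so it is
  preserved under transposition.\<close>

definition cover_expansive_tiles :: "node set set \<Rightarrow> bool" where
  "cover_expansive_tiles T \<longleftrightarrow>
     (\<forall>t\<in>T. \<forall>s\<in>T. \<forall>a\<in>t. SE a \<in> s \<longrightarrow> col (tile_start s) \<le> col (tile_start t)) \<and>
     (\<forall>t\<in>T. \<forall>s\<in>T. \<forall>a\<in>t. SW a \<in> s \<longrightarrow> col (tile_end t) \<le> col (tile_end s))"

lemma cover_expansive_tilesI:
  assumes "is_dyck_tiling T L M" "cover_expansive T L M"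
  shows "cover_expansive_tiles T"
  unfolding cover_expansive_tiles_def
proof (intro conjI ballI impI)
  fix t s a assume ts: "t \<in> T" "s \<in> T" "a \<in> t"
  {
    assume "SE a \<in> s"
    with ts have "col (tile_start (tile_of T (SE a))) \<le> col (tile_start (tile_of T a))"
      using assms dyck_tiling_subset[OF assms(1)] unfolding cover_expansive_def by blast
    with ts \<open>SE a \<in> s\<close> show "col (tile_start s) \<le> col (tile_start t)"
      by (simp add: tile_of_eq[OF assms(1)])
  next
    assume "SW a \<in> s"
    with ts have "col (tile_end (tile_of T a)) \<le> col (tile_end (tile_of T (SW a)))"
      using assms dyck_tiling_subset[OF assms(1)] unfolding cover_expansive_def by blast
    with ts \<open>SW a \<in> s\<close> show "col (tile_end t) \<le> col (tile_end s)"
      by (simp add: tile_of_eq[OF assms(1)])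
  }
qed

lemma cover_expansive_tilesD:
  assumes "cover_expansive_tiles T" "t \<in> T" "s \<in> T" "a \<in> t"
  shows "SE a \<in> s \<Longrightarrow> col (tile_start s) \<le> col (tile_start t)"
    and "SW a \<in> s \<Longrightarrow> col (tile_end t) \<le> col (tile_end s)"
  using assms unfolding cover_expansive_tiles_def by blast+

lemma col_swap [simp]: "col (prod.swap n) = - col n"
  by (simp add: col_def)

lemma ht_swap [simp]: "ht (prod.swap n) = ht n"
  by (simp add: ht_def)

lemma swap_moves [simp]:
  "prod.swap (NE n) = NW (prod.swap n)" "prod.swap (SE n) = SW (prod.swap n)"
  "prod.swap (SW n) = SE (prod.swap n)" "prod.swap (NW n) = NE (prod.swap n)"
  "prod.swap (Nn n) = Nn (prod.swap n)"
  by (simp_all add: NE_def SE_def SW_def NW_def Nn_def)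

lemma is_partition_swap:
  assumes "is_partition L" shows "is_partition (prod.swap ` L)"
  unfolding is_partition_def
proof (intro conjI allI impI ballI)
  show "finite (prod.swap ` L)" using assms unfolding is_partition_def by simp
next
  fix n assume "n \<in> prod.swap ` L"
  then show "case n of (a, b) \<Rightarrow> 1 \<le> a \<and> 1 \<le> b"
    using partition_pos[OF assms] by (cases n) auto
next
  fix a b a' b'
  assume "(a, b) \<in> prod.swap ` L \<and> 1 \<le> a' \<and> a' \<le> a \<and> 1 \<le> b' \<and> b' \<le> b"
  then show "(a', b') \<in> prod.swap ` L"
    using partition_down_closed[OF assms, of b a b' a'] by simp
qed

lemma tile_walk_rev_swap:
  assumes "tile_walk ns" shows "tile_walk (rev (map prod.swap ns))"
  unfolding tile_walk_def
proof (intro allI impI)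
  fix i assume i: "Suc i < length (rev (map prod.swap ns))"
  define k where "k = length ns - Suc (Suc i)"
  have k: "Suc k < length ns" "length ns - Suc i = Suc k" "length ns - Suc (Suc i) = k"
    using i by (simp_all add: k_def)
  have "rev (map prod.swap ns) ! i = prod.swap (ns ! Suc k)"
    "rev (map prod.swap ns) ! Suc i = prod.swap (ns ! k)"
    using i k by (simp_all add: rev_nth)
  moreover have "ns ! Suc k \<in> {NE (ns ! k), SE (ns ! k)}"
    using assms k(1) unfolding tile_walk_def by blast
  ultimately show "rev (map prod.swap ns) ! Suc i
      \<in> {NE (rev (map prod.swap ns) ! i), SE (rev (map prod.swap ns) ! i)}"
    by auto
qed

lemma is_tile_swap:
  assumes "is_tile t" shows "is_tile (prod.swap ` t)"
proof -
  obtain ns where "ns \<noteq> []" "set ns = t" "tile_walk ns"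
    using assms unfolding is_tile_iff_walk by blast
  then have "rev (map prod.swap ns) \<noteq> [] \<and> set (rev (map prod.swap ns)) = prod.swap ` t
      \<and> tile_walk (rev (map prod.swap ns))"
    by (simp add: tile_walk_rev_swap)
  then show ?thesis unfolding is_tile_iff_walk by blast
qed

lemma tile_start_swap:
  assumes "is_tile t" shows "tile_start (prod.swap ` t) = prod.swap (tile_end t)"
proof (rule tile_start_eq[OF is_tile_swap[OF assms]])
  show "prod.swap (tile_end t) \<in> prod.swap ` t" using tile_end(1)[OF assms] by (rule imageI)
  fix m assume "m \<in> prod.swap ` t"
  then obtain m' where "m' \<in> t" "m = prod.swap m'" by blast
  then show "col (prod.swap (tile_end t)) \<le> col m" using tile_end(2)[OF assms] by simp
qed

lemma tile_end_swap:
  assumes "is_tile t" shows "tile_end (prod.swap ` t) = prod.swap (tile_start t)"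
proof (rule tile_end_eq[OF is_tile_swap[OF assms]])
  show "prod.swap (tile_start t) \<in> prod.swap ` t" using tile_start(1)[OF assms] by (rule imageI)
  fix m assume "m \<in> prod.swap ` t"
  then obtain m' where "m' \<in> t" "m = prod.swap m'" by blast
  then show "col m \<le> col (prod.swap (tile_start t))" using tile_start(2)[OF assms] by simp
qed

lemma tile_ht_swap: "tile_ht (prod.swap ` t) = tile_ht t"
  unfolding tile_ht_def image_image by simp

lemma is_dyck_tiling_swap:
  assumes "is_dyck_tiling T L M"
  shows "is_dyck_tiling ((`) prod.swap ` T) (prod.swap ` L) (prod.swap ` M)"
  unfolding is_dyck_tiling_def
proof (intro conjI ballI impI)
  fix t' assume "t' \<in> (`) prod.swap ` T"
  then obtain t where t: "t \<in> T" "t' = prod.swap ` t" by blast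
  note tile = dyck_tiling_tile[OF assms t(1)]
  show "is_dyck_tile t'"
    unfolding is_dyck_tile_def t(2)
    using is_tile_swap[OF tile] dyck_tiling_ht[OF assms t(1)]
    by (simp add: tile_start_swap[OF tile] tile_end_swap[OF tile] tile_ht_swap)
next
  fix t' s' assume "t' \<in> (`) prod.swap ` T" "s' \<in> (`) prod.swap ` T" "t' \<noteq> s'"
  then obtain t s where "t \<in> T" "s \<in> T" "t' = prod.swap ` t" "s' = prod.swap ` s" "t \<noteq> s"
    by blast
  then have "t \<inter> s = {}" using dyck_tilingD(2)[OF assms] by blast
  then show "t' \<inter> s' = {}"
    using \<open>t' = prod.swap ` t\<close> \<open>s' = prod.swap ` s\<close> by (simp add: image_Int[OF inj_swap, symmetric])
next
  show "\<Union> ((`) prod.swap ` T) = prod.swap ` L - prod.swap ` M"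
    by (simp add: image_Union[symmetric] dyck_tilingD(3)[OF assms] image_set_diff)
qed

lemma cover_expansive_tiles_swap:
  assumes tiles: "\<And>t. t \<in> T \<Longrightarrow> is_tile t" and ce: "cover_expansive_tiles T"
  shows "cover_expansive_tiles ((`) prod.swap ` T)"
  unfolding cover_expansive_tiles_def
proof (intro conjI ballI impI)
  fix t' s' a' assume "t' \<in> (`) prod.swap ` T" "s' \<in> (`) prod.swap ` T" "a' \<in> t'"
  then obtain t s a where ts: "t \<in> T" "s \<in> T" "a \<in> t"
    and eq: "t' = prod.swap ` t" "s' = prod.swap ` s" "a' = prod.swap a" by blast
  {
    assume "SE a' \<in> s'"
    then have "SW a \<in> s" using eq by (metis inj_image_mem_iff inj_swap swap_moves(3))
    then show "col (tile_start s') \<le> col (tile_start t')"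
      using cover_expansive_tilesD(2)[OF ce ts] eq
      by (simp add: tile_start_swap tiles ts(1,2))
  next
    assume "SW a' \<in> s'"
    then have "SE a \<in> s" using eq by (metis inj_image_mem_iff inj_swap swap_moves(2))
    then show "col (tile_end t') \<le> col (tile_end s')"
      using cover_expansive_tilesD(1)[OF ce ts] eq
      by (simp add: tile_end_swap tiles ts(1,2))
  }
qed

text \<open>One step of the walk to the left along \<open>t'\<close> above \<open>t\<close>: cover-expansiveness at
  \<open>N(x)\<close> forces the tile of \<open>NW(x)\<close> to be \<open>t\<close> or \<open>t'\<close>.\<close>

lemma Nn_tile_step_left:
  assumes L: "is_partition L" and M: "is_partition M" and tiling: "is_dyck_tiling T L M"
    and ce: "cover_expansive_tiles T"
    and t: "t \<in> T" and t': "t' \<in> T" and x: "x \<in> t" and Nx: "Nn x \<in> t'"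
    and start: "col (tile_start t) \<le> col (tile_start t')"
  shows "Nn x = tile_start t' \<and> NW x \<in> t \<or> (\<exists>x'\<in>t. Nn x' \<in> t' \<and> col x' = col x - 1)"
proof -
  note tile = dyck_tiling_tile[OF tiling t] and tile' = dyck_tiling_tile[OF tiling t']
  note same_tile = dyck_tilingD(2)[OF tiling]
  have "NW x \<in> L - M"
    using skew_diagram_diamond(1)[OF L M] dyck_tiling_subset[OF tiling] t t' x Nx by blast
  then obtain s where s: "s \<in> T" "NW x \<in> s" by (rule dyck_tiling_covers[OF tiling])
  note tile_s = dyck_tiling_tile[OF tiling s(1)]
  have "col (tile_end t') \<le> col (tile_end s)"
    using cover_expansive_tilesD(2)[OF ce t' s(1) Nx] s(2) by (simp add: moves_Nn)
  moreover have "col (Nn x) \<le> col (tile_end t')" using tile_end(2)[OF tile' Nx] .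
  ultimately have "NE (NW x) \<in> s \<or> SE (NW x) \<in> s"
    using tile_succ[OF tile_s s(2)] by simp
  then have s_cases: "s = t' \<or> s = t"
    using same_tile[OF t' s(1) Nx] same_tile[OF t s(1) x] by (auto simp: moves_Nn)
  show ?thesis
  proof (cases "Nn x = tile_start t'")
    case True
    then have "s \<noteq> t'" using tile_start(2)[OF tile', of "NW x"] s(2) by (auto simp flip: True)
    with s_cases s(2) True show ?thesis by simp
  next
    case False
    then have "col (tile_start t') < col (Nn x)" using col_tile_start_less[OF tile' Nx] by simp
    then have "SW (Nn x) \<in> t' \<or> NW (Nn x) \<in> t'" using tile_pred[OF tile' Nx] by blast
    then consider "NW x \<in> t'" | "Nn (NW x) \<in> t'" by (auto simp: moves_Nn)
    then show ?thesis
    proof cases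
      case 1
      have "t \<noteq> t'" using Nn_notin_tile[OF tile x] Nx by blast
      with 1 have "NW x \<notin> t" using same_tile[OF t t'] by blast
      moreover have "col (tile_start t) < col x"
        using start \<open>col (tile_start t') < col (Nn x)\<close> by simp
      ultimately have "SW x \<in> t" using tile_pred[OF tile x] by blast
      with 1 show ?thesis by (intro disjI2 bexI[of _ "SW x"]) (simp_all add: moves_Nn)
    next
      case 2
      then have "s \<noteq> t'" using Nn_notin_tile[OF tile', of "NW x"] s(2) by blast
      with s_cases s(2) 2 show ?thesis by auto
    qed
  qed
qed

lemma tile_ht_le_if_start_le:
  assumes L: "is_partition L" and M: "is_partition M" and tiling: "is_dyck_tiling T L M"
    and ce: "cover_expansive_tiles T"
    and t: "t \<in> T" and t': "t' \<in> T" and x: "x \<in> t" and Nx: "Nn x \<in> t'"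
    and start: "col (tile_start t) \<le> col (tile_start t')"
  shows "tile_ht t' \<le> tile_ht t + 1"
proof -
  let ?X = "{y \<in> t. Nn y \<in> t'}"
  have "finite ?X" using finite_tile[OF dyck_tiling_tile[OF tiling t]] by simp
  moreover have "?X \<noteq> {}" using x Nx by blast
  ultimately obtain y where y: "y \<in> ?X" and y_min: "\<And>z. z \<in> ?X \<Longrightarrow> col y \<le> col z"
    using finite_has_min_image[of ?X col] by blast
  then have "\<not> (\<exists>y'\<in>t. Nn y' \<in> t' \<and> col y' = col y - 1)" by fastforce
  then have "Nn y = tile_start t'" "NW y \<in> t"
    using Nn_tile_step_left[OF L M tiling ce t t' _ _ start] y by blast+
  then have "tile_ht t' = ht (Nn y)" using dyck_tiling_ht(1)[OF tiling t'] by simp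
  also have "\<dots> = ht (NW y) + 1" by simp
  also have "\<dots> \<le> tile_ht t + 1"
    using ht_le_tile_ht[OF dyck_tiling_tile[OF tiling t] \<open>NW y \<in> t\<close>] by simp
  finally show ?thesis .
qed

lemma tile_ht_le_if_end_le:
  assumes L: "is_partition L" and M: "is_partition M" and tiling: "is_dyck_tiling T L M"
    and ce: "cover_expansive_tiles T"
    and t: "t \<in> T" and t': "t' \<in> T" and x: "x \<in> t" and Nx: "Nn x \<in> t'"
    and end_le: "col (tile_end t') \<le> col (tile_end t)"
  shows "tile_ht t' \<le> tile_ht t + 1"
proof -
  note tile = dyck_tiling_tile[OF tiling t] and tile' = dyck_tiling_tile[OF tiling t']
  have "tile_ht (prod.swap ` t') \<le> tile_ht (prod.swap ` t) + 1"
  proof (rule tile_ht_le_if_start_le)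
    show "is_dyck_tiling ((`) prod.swap ` T) (prod.swap ` L) (prod.swap ` M)"
      using is_dyck_tiling_swap[OF tiling] .
    show "cover_expansive_tiles ((`) prod.swap ` T)"
      using cover_expansive_tiles_swap[OF dyck_tiling_tile[OF tiling] ce] .
    show "col (tile_start (prod.swap ` t)) \<le> col (tile_start (prod.swap ` t'))"
      using end_le by (simp add: tile_start_swap[OF tile] tile_start_swap[OF tile'])
    show "Nn (prod.swap x) \<in> prod.swap ` t'" using Nx by (metis imageI swap_moves(5))
  qed (use L M t t' x is_partition_swap in auto)
  then show ?thesis by (simp add: tile_ht_swap)
qed

text \<open>Both cover-expansiveness conditions are applied at the diamond \<open>x, NE(x), N(x)\<close>.\<close>

lemma Nn_tile_start_le_or_end_le:
  assumes L: "is_partition L" and M: "is_partition M" and tiling: "is_dyck_tiling T L M"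
    and ce: "cover_expansive_tiles T"
    and t: "t \<in> T" and t': "t' \<in> T" and x: "x \<in> t" and Nx: "Nn x \<in> t'"
  shows "col (tile_start t) \<le> col (tile_start t') \<or> col (tile_end t') \<le> col (tile_end t)"
proof -
  note same_tile = dyck_tilingD(2)[OF tiling]
  have "NE x \<in> L - M"
    using skew_diagram_diamond(2)[OF L M] dyck_tiling_subset[OF tiling] t t' x Nx by blast
  then obtain s where s: "s \<in> T" "NE x \<in> s" by (rule dyck_tiling_covers[OF tiling])
  note tile_s = dyck_tiling_tile[OF tiling s(1)]
  have start_s: "col (tile_start s) \<le> col (tile_start t')"
    using cover_expansive_tilesD(1)[OF ce t' s(1) Nx] s(2) by (simp add: moves_Nn)
  moreover have "col (tile_start t') \<le> col (Nn x)"
    using tile_start(2)[OF dyck_tiling_tile[OF tiling t'] Nx] .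
  ultimately have "SW (NE x) \<in> s \<or> NW (NE x) \<in> s"
    using tile_pred[OF tile_s s(2)] by simp
  then have "s = t \<or> s = t'"
    using same_tile[OF t s(1) x] same_tile[OF t' s(1) Nx] by (auto simp: moves_Nn)
  then show ?thesis
  proof
    assume "s = t"
    with start_s show ?thesis by simp
  next
    assume "s = t'"
    with x cover_expansive_tilesD(2)[OF ce s(1) t s(2)] show ?thesis by simp
  qed
qed

theorem lemma4p4:
  fixes L M :: "node set" and T :: "node set set" and a :: node
  assumes "is_partition L" and "is_partition M" and "M \<subseteq> L"
    and "is_dyck_tiling T L M" and "cover_expansive T L M"
    and "a \<in> L - M" and "Nn a \<in> L - M"
  shows "dp T (Nn a) < dp T a"
proof -
  note L = assms(1) and M = assms(2) and tiling = assms(4)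
  have ce: "cover_expansive_tiles T" using cover_expansive_tilesI[OF tiling assms(5)] .
  obtain t where t: "t \<in> T" "a \<in> t" using dyck_tiling_covers[OF tiling assms(6)] .
  obtain t' where t': "t' \<in> T" "Nn a \<in> t'" using dyck_tiling_covers[OF tiling assms(7)] .
  have "tile_ht t' \<le> tile_ht t + 1"
    using Nn_tile_start_le_or_end_le[OF L M tiling ce t(1) t'(1) t(2) t'(2)]
      tile_ht_le_if_start_le[OF L M tiling ce t(1) t'(1) t(2) t'(2)]
      tile_ht_le_if_end_le[OF L M tiling ce t(1) t'(1) t(2) t'(2)]
    by blast
  then show ?thesis
    unfolding dp_def using tile_of_eq[OF tiling] t t' by simp
qed

end
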